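(* Let $\mathcal A$ be an $\mathbf{HpsUL}^\ast_\omega$-chain. Let $B\subseteq A$ with $\{e,f,\bot,\top\}\subseteq B$, and let $M$, $D$, $\cdot^D$ be as described in the context. Then for all $X,Y\in D$, $$X\cdot^DY\subseteq (e] \iff (X\cdot^DY)\cdot^DY\subseteq (e],$$ where $(e]=\{c\in M: c\le e\}$.
   Context: An $\mathbf{HpsUL}$-algebra is a structure $\mathcal A=\langle A,\wedge,\vee,\cdot,\backslash,/,e,f,\bot,\top\rangle$ such that: - it is a bounded lattice; - $\langle A,\cdot,e\rangle$ is a monoid; - $xy\le z$ iff $x\le z/y$ iff $y\le x\backslash z$; - for all $x,y,u,v$: $\lambda_u((x\vee y)\backslash x)\vee\rho_v((x\vee y)\backslash y)=e$, where $\lambda_a(b)=(a\backslash(ba))\wedge e$ and $\rho_a(b)=((ab)/a)\wedge e$. An $\mathbf{HpsUL}^\ast_\omega$-chain is a linearly ordered $\mathbf{HpsUL}$-algebra such that $xy\le e$ implies $yx\le e$, and $x\backslash e=x^2\backslash e$ for all $x$. Construction. $M$ is the submonoid of $\langle A,\cdot,e\rangle$ generated by $B$. For $a_1,a_2\in M$ and $b\in B$, put $(a_1^la_2^r)^{-1}(b]=\{c\in M: a_1ca_2\le b\}$. Let $\bar D$ be the set of all such sets. Let $D=\{\bigcap\chi:\chi\subseteq\bar D\}$, with the empty intersection equal to $M$. For $X\subseteq M$, let $C(X)$ be the intersection of all members of $\bar D$ containing $X$. For $X,Y\subseteq M$, let $XY=\{xy:x\in X,y\in Y\}$ and $X\cdot^DY=C(XY)$.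 *)

theory Defs
  imports Main
begin

text \<open>An HpsUL-algebra whose lattice reduct is the bounded lattice on the type 'a
  (meet = inf, join = sup, bottom = bot, top = top); the remaining operations are
  multiplication mul, left residual ld (ld x z = x\z), right residual rd (rd z y = z/y),
  unit e and the constant f (no axioms on f).\<close>

definition lam_op :: "('a \<Rightarrow> 'a \<Rightarrow> 'a) \<Rightarrow> ('a \<Rightarrow> 'a \<Rightarrow> 'a) \<Rightarrow> 'a::lattice \<Rightarrow> 'a \<Rightarrow> 'a \<Rightarrow> 'a" where
  "lam_op mul ld e a b = inf (ld a (mul b a)) e"

definition rho_op :: "('a \<Rightarrow> 'a \<Rightarrow> 'a) \<Rightarrow> ('a \<Rightarrow> 'a \<Rightarrow> 'a) \<Rightarrow> 'a::lattice \<Rightarrow> 'a \<Rightarrow> 'a \<Rightarrow> 'a" where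
  "rho_op mul rd e a b = inf (rd (mul a b) a) e"

definition HpsUL ::
  "('a::bounded_lattice \<Rightarrow> 'a \<Rightarrow> 'a) \<Rightarrow> ('a \<Rightarrow> 'a \<Rightarrow> 'a) \<Rightarrow> ('a \<Rightarrow> 'a \<Rightarrow> 'a) \<Rightarrow> 'a \<Rightarrow> 'a \<Rightarrow> bool" where
  "HpsUL mul ld rd e f \<longleftrightarrow>
     (\<forall>x y z. mul (mul x y) z = mul x (mul y z)) \<and>
     (\<forall>x. mul e x = x \<and> mul x e = x) \<and>
     (\<forall>x y z. (mul x y \<le> z \<longleftrightarrow> x \<le> rd z y) \<and> (mul x y \<le> z \<longleftrightarrow> y \<le> ld x z)) \<and>
     (\<forall>x y u v. sup (lam_op mul ld e u (ld (sup x y) x))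
                     (rho_op mul rd e v (ld (sup x y) y)) = e)"

definition HpsUL_star_omega_chain ::
  "('a::bounded_lattice \<Rightarrow> 'a \<Rightarrow> 'a) \<Rightarrow> ('a \<Rightarrow> 'a \<Rightarrow> 'a) \<Rightarrow> ('a \<Rightarrow> 'a \<Rightarrow> 'a) \<Rightarrow> 'a \<Rightarrow> 'a \<Rightarrow> bool" where
  "HpsUL_star_omega_chain mul ld rd e f \<longleftrightarrow>
     HpsUL mul ld rd e f \<and>
     (\<forall>x y::'a. x \<le> y \<or> y \<le> x) \<and>
     (\<forall>x y. mul x y \<le> e \<longrightarrow> mul y x \<le> e) \<and>
     (\<forall>x. ld x e = ld (mul x x) e)"

inductive_set genM :: "('a \<Rightarrow> 'a \<Rightarrow> 'a) \<Rightarrow> 'a \<Rightarrow> 'a set \<Rightarrow> 'a set"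
  for mul :: "'a \<Rightarrow> 'a \<Rightarrow> 'a" and e :: 'a and B :: "'a set" where
  unit: "e \<in> genM mul e B"
| gen: "b \<in> B \<Longrightarrow> b \<in> genM mul e B"
| mult: "x \<in> genM mul e B \<Longrightarrow> y \<in> genM mul e B \<Longrightarrow> mul x y \<in> genM mul e B"

text \<open>(a1^l a2^r)^{-1}(b] = {c \<in> M. a1 c a2 \<le> b}\<close>
definition preimg :: "('a::order \<Rightarrow> 'a \<Rightarrow> 'a) \<Rightarrow> 'a set \<Rightarrow> 'a \<Rightarrow> 'a \<Rightarrow> 'a \<Rightarrow> 'a set" where
  "preimg mul M a1 a2 b = {c \<in> M. mul (mul a1 c) a2 \<le> b}"

definition Dbar :: "('a::order \<Rightarrow> 'a \<Rightarrow> 'a) \<Rightarrow> 'a \<Rightarrow> 'a set \<Rightarrow> 'a set set" where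
  "Dbar mul e B = {preimg mul (genM mul e B) a1 a2 b | a1 a2 b.
                     a1 \<in> genM mul e B \<and> a2 \<in> genM mul e B \<and> b \<in> B}"

text \<open>D: intersections of subfamilies of Dbar, the empty intersection being M.\<close>
definition Dsets :: "('a::order \<Rightarrow> 'a \<Rightarrow> 'a) \<Rightarrow> 'a \<Rightarrow> 'a set \<Rightarrow> 'a set set" where
  "Dsets mul e B = {genM mul e B \<inter> \<Inter>\<chi> | \<chi>. \<chi> \<subseteq> Dbar mul e B}"

text \<open>C(X): intersection of all members of Dbar containing X (empty intersection = M).\<close>
definition Cl :: "('a::order \<Rightarrow> 'a \<Rightarrow> 'a) \<Rightarrow> 'a \<Rightarrow> 'a set \<Rightarrow> 'a set \<Rightarrow> 'a set" where
  "Cl mul e B X = genM mul e B \<inter> \<Inter>{Z \<in> Dbar mul e B. X \<subseteq> Z}"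

definition setprod :: "('a \<Rightarrow> 'a \<Rightarrow> 'a) \<Rightarrow> 'a set \<Rightarrow> 'a set \<Rightarrow> 'a set" where
  "setprod mul X Y = {mul x y | x y. x \<in> X \<and> y \<in> Y}"

definition Dmul :: "('a::order \<Rightarrow> 'a \<Rightarrow> 'a) \<Rightarrow> 'a \<Rightarrow> 'a set \<Rightarrow> 'a set \<Rightarrow> 'a set \<Rightarrow> 'a set" where
  "Dmul mul e B X Y = Cl mul e B (setprod mul X Y)"

definition downM :: "('a::order \<Rightarrow> 'a \<Rightarrow> 'a) \<Rightarrow> 'a \<Rightarrow> 'a set \<Rightarrow> 'a \<Rightarrow> 'a set" where
  "downM mul e B a = {c \<in> genM mul e B. c \<le> a}"

end

theory Submission
  imports Defs
begin

text \<open>Since \<open>(e]\<close> and \<open>{c \<in> M. c y \<le> e}\<close> are members of \<open>Dbar\<close>, a product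
  \<open>X \<cdot>\<^sup>D Y = C(X Y)\<close> lies in either of them iff every \<open>x y\<close> does. In an
  \<open>HpsUL\<^sup>*\<^sub>\<omega>\<close>-chain \<open>x y \<le> e \<longleftrightarrow> y x \<le> e \<longleftrightarrow> x \<le> y\e = y\<^sup>2\e \<longleftrightarrow> x y y \<le> e\<close>, which gives the
  backward direction at once. For the forward direction, if \<open>X Y \<subseteq> (e]\<close> then for
  \<open>y, y' \<in> Y\<close> and \<open>m = max y y'\<close> we get \<open>x y' y \<le> x m m \<le> e\<close>; so \<open>X Y\<close>, and hence its
  closure \<open>X \<cdot>\<^sup>D Y\<close>, lies in \<open>{c \<in> M. c y \<le> e}\<close>.\<close>

lemma HpsUL_assoc:
  "HpsUL mul ld rd e f \<Longrightarrow> mul (mul x y) z = mul x (mul y z)"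
  unfolding HpsUL_def by blast

lemma HpsUL_unit:
  "HpsUL mul ld rd e f \<Longrightarrow> mul e x = x"
  "HpsUL mul ld rd e f \<Longrightarrow> mul x e = x"
  unfolding HpsUL_def by blast+

lemma HpsUL_residuation:
  "HpsUL mul ld rd e f \<Longrightarrow> mul x y \<le> z \<longleftrightarrow> x \<le> rd z y"
  "HpsUL mul ld rd e f \<Longrightarrow> mul x y \<le> z \<longleftrightarrow> y \<le> ld x z"
  unfolding HpsUL_def by blast+

lemma HpsUL_mul_mono:
  assumes "HpsUL mul ld rd e f" and "a \<le> b" and "c \<le> d"
  shows "mul a c \<le> mul b d"
proof -
  have "mul a c \<le> mul b c"
    using assms(2) HpsUL_residuation(1)[OF assms(1), of b c "mul b c"]
      HpsUL_residuation(1)[OF assms(1), of a c "mul b c"] by auto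
  also have "\<dots> \<le> mul b d"
    using assms(3) HpsUL_residuation(2)[OF assms(1), of b d "mul b d"]
      HpsUL_residuation(2)[OF assms(1), of b c "mul b d"] by auto
  finally show ?thesis .
qed

lemma HpsUL_star_omega_chain_le_unit_iff_mul_right:
  assumes "HpsUL_star_omega_chain mul ld rd e f"
  shows "mul x y \<le> e \<longleftrightarrow> mul (mul x y) y \<le> e"
proof -
  have A: "HpsUL mul ld rd e f"
    and swap: "\<And>x y. mul x y \<le> e \<longleftrightarrow> mul y x \<le> e"
    and sq: "ld y e = ld (mul y y) e"
    using assms unfolding HpsUL_star_omega_chain_def by blast+
  have "mul x y \<le> e \<longleftrightarrow> x \<le> ld y e"
    using swap HpsUL_residuation(2)[OF A] by blast
  also have "\<dots> \<longleftrightarrow> mul (mul y y) x \<le> e"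
    using sq HpsUL_residuation(2)[OF A] by simp
  also have "\<dots> \<longleftrightarrow> mul x (mul y y) \<le> e"
    by (rule swap)
  also have "\<dots> \<longleftrightarrow> mul (mul x y) y \<le> e"
    by (simp add: HpsUL_assoc[OF A])
  finally show ?thesis .
qed

lemma HpsUL_star_omega_chain_le_unit_mul_right:
  assumes "HpsUL_star_omega_chain mul ld rd e f"
    and "mul x y \<le> e" and "mul x y' \<le> e"
  shows "mul (mul x y') y \<le> e"
proof -
  have A: "HpsUL mul ld rd e f" and lin: "\<forall>a b::'a. a \<le> b \<or> b \<le> a"
    using assms(1) unfolding HpsUL_star_omega_chain_def by blast+
  define m where "m = (if y \<le> y' then y' else y)"
  have "y \<le> m" "y' \<le> m" "mul x m \<le> e"
    using lin assms(2,3) unfolding m_def by auto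
  then have "mul (mul x y') y \<le> mul (mul x m) m" and "mul (mul x m) m \<le> e"
    using HpsUL_mul_mono[OF A] HpsUL_star_omega_chain_le_unit_iff_mul_right[OF assms(1)]
    by auto
  then show ?thesis by (rule order_trans)
qed

lemma Dsets_subset_genM: "X \<in> Dsets mul e B \<Longrightarrow> X \<subseteq> genM mul e B"
  unfolding Dsets_def by auto

lemma setprod_subset_genM:
  "X \<subseteq> genM mul e B \<Longrightarrow> Y \<subseteq> genM mul e B \<Longrightarrow> setprod mul X Y \<subseteq> genM mul e B"
  unfolding setprod_def by (auto intro: genM.mult)

lemma Cl_subset_genM: "Cl mul e B Z \<subseteq> genM mul e B"
  unfolding Cl_def by auto

lemma Dmul_subset_genM: "Dmul mul e B X Y \<subseteq> genM mul e B"
  unfolding Dmul_def by (rule Cl_subset_genM)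

lemma subset_Cl: "Z \<subseteq> genM mul e B \<Longrightarrow> Z \<subseteq> Cl mul e B Z"
  unfolding Cl_def by auto

lemma Cl_subset_Dbar_iff:
  "P \<in> Dbar mul e B \<Longrightarrow> Z \<subseteq> genM mul e B \<Longrightarrow> Cl mul e B Z \<subseteq> P \<longleftrightarrow> Z \<subseteq> P"
  using subset_Cl[of Z mul e B] unfolding Cl_def by auto

lemma Dmul_subset_Dbar_iff:
  assumes "P \<in> Dbar mul e B" and "X \<subseteq> genM mul e B" and "Y \<subseteq> genM mul e B"
  shows "Dmul mul e B X Y \<subseteq> P \<longleftrightarrow> (\<forall>x\<in>X. \<forall>y\<in>Y. mul x y \<in> P)"
  using Cl_subset_Dbar_iff[OF assms(1) setprod_subset_genM[OF assms(2,3)]]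
  unfolding Dmul_def setprod_def by auto

lemma mul_mem_Dmul:
  assumes "x \<in> X" and "y \<in> Y" and "X \<subseteq> genM mul e B" and "Y \<subseteq> genM mul e B"
  shows "mul x y \<in> Dmul mul e B X Y"
proof -
  have "mul x y \<in> setprod mul X Y" using assms(1,2) unfolding setprod_def by blast
  then show ?thesis
    using subset_Cl[OF setprod_subset_genM[OF assms(3,4)]] unfolding Dmul_def by blast
qed

lemma preimg_in_Dbar:
  "a1 \<in> genM mul e B \<Longrightarrow> a2 \<in> genM mul e B \<Longrightarrow> b \<in> B \<Longrightarrow>
    preimg mul (genM mul e B) a1 a2 b \<in> Dbar mul e B"
  unfolding Dbar_def by blast

lemma Dmul_subset_downM_iff:
  assumes "HpsUL mul ld rd e f" and "e \<in> B" and "a \<in> B"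
    and "X \<subseteq> genM mul e B" and "Y \<subseteq> genM mul e B"
  shows "Dmul mul e B X Y \<subseteq> downM mul e B a \<longleftrightarrow> (\<forall>x\<in>X. \<forall>y\<in>Y. mul x y \<le> a)"
proof -
  have "downM mul e B a = preimg mul (genM mul e B) e e a"
    unfolding downM_def preimg_def using HpsUL_unit[OF assms(1)] by simp
  then have "downM mul e B a \<in> Dbar mul e B"
    using preimg_in_Dbar[OF genM.unit genM.unit assms(3)] by simp
  then have "Dmul mul e B X Y \<subseteq> downM mul e B a \<longleftrightarrow>
      (\<forall>x\<in>X. \<forall>y\<in>Y. mul x y \<in> downM mul e B a)"
    by (rule Dmul_subset_Dbar_iff[OF _ assms(4,5)])
  also have "\<dots> \<longleftrightarrow> (\<forall>x\<in>X. \<forall>y\<in>Y. mul x y \<le> a)"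
    using assms(4,5) by (auto simp: downM_def intro: genM.mult)
  finally show ?thesis .
qed

lemma HpsUL_star_omega_chain_Dmul_mul_right_le_unit:
  assumes "HpsUL_star_omega_chain mul ld rd e f" and "e \<in> B"
    and "X \<subseteq> genM mul e B" and "Y \<subseteq> genM mul e B"
    and "\<forall>x\<in>X. \<forall>y\<in>Y. mul x y \<le> e" and "z \<in> Dmul mul e B X Y" and "y \<in> Y"
  shows "mul z y \<le> e"
proof -
  have A: "HpsUL mul ld rd e f" using assms(1) unfolding HpsUL_star_omega_chain_def by blast
  let ?P = "preimg mul (genM mul e B) e y e"
  have "y \<in> genM mul e B" using assms(4,7) by blast
  then have P: "?P \<in> Dbar mul e B" by (rule preimg_in_Dbar[OF genM.unit _ assms(2)])
  have "\<forall>x\<in>X. \<forall>y'\<in>Y. mul x y' \<in> ?P"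
  proof (intro ballI)
    fix x y' assume "x \<in> X" "y' \<in> Y"
    then have "mul x y \<le> e" and "mul x y' \<le> e" and "mul x y' \<in> genM mul e B"
      using assms(3,4,5,7) by (blast intro: genM.mult)+
    then show "mul x y' \<in> ?P"
      using HpsUL_star_omega_chain_le_unit_mul_right[OF assms(1)]
      unfolding preimg_def HpsUL_unit[OF A] by simp
  qed
  then have "Dmul mul e B X Y \<subseteq> ?P" using Dmul_subset_Dbar_iff[OF P assms(3,4)] by simp
  then have "z \<in> ?P" using assms(6) by blast
  then show ?thesis unfolding preimg_def HpsUL_unit[OF A] by simp
qed

theorem lemma3p7:
  fixes mul ld rd :: "'a::bounded_lattice \<Rightarrow> 'a \<Rightarrow> 'a" and e f :: 'a and B :: "'a set"
  assumes "HpsUL_star_omega_chain mul ld rd e f"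
    and "{e, f, bot, top} \<subseteq> B"
    and "X \<in> Dsets mul e B" and "Y \<in> Dsets mul e B"
  shows "Dmul mul e B X Y \<subseteq> downM mul e B e \<longleftrightarrow>
         Dmul mul e B (Dmul mul e B X Y) Y \<subseteq> downM mul e B e"
proof -
  have A: "HpsUL mul ld rd e f" using assms(1) unfolding HpsUL_star_omega_chain_def by blast
  have eB: "e \<in> B" using assms(2) by simp
  have XM: "X \<subseteq> genM mul e B" and YM: "Y \<subseteq> genM mul e B"
    using assms(3,4) by (simp_all add: Dsets_subset_genM)
  note lhs = Dmul_subset_downM_iff[OF A eB eB XM YM]
  note rhs = Dmul_subset_downM_iff[OF A eB eB Dmul_subset_genM YM]
  show ?thesis
  proof
    assume "Dmul mul e B X Y \<subseteq> downM mul e B e"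
    then show "Dmul mul e B (Dmul mul e B X Y) Y \<subseteq> downM mul e B e"
      unfolding lhs rhs
      using HpsUL_star_omega_chain_Dmul_mul_right_le_unit[OF assms(1) eB XM YM] by blast
  next
    assume "Dmul mul e B (Dmul mul e B X Y) Y \<subseteq> downM mul e B e"
    then have "\<forall>x\<in>X. \<forall>y\<in>Y. mul (mul x y) y \<le> e"
      unfolding rhs using mul_mem_Dmul[OF _ _ XM YM] by blast
    then show "Dmul mul e B X Y \<subseteq> downM mul e B e"
      unfolding lhs using HpsUL_star_omega_chain_le_unit_iff_mul_right[OF assms(1)] by blast
  qed
qed

end
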